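(* (i) For each $m\in\{1,\dots,M\}$ and every measurable $q:\mathbb R^{p-\#\mathcal X(m)}\to\mathbb R$ with $\mathbb E|q(\boldsymbol X_{-\mathcal X(m)})|<\infty$, almost surely $$|\mathbb E q(\boldsymbol X_{-\mathcal X(m)})-\mathbb E(q(\boldsymbol X_{-\mathcal X(m)})\mid\boldsymbol X_{\mathcal X(m)})|\le\frac{\delta_0\,\mathbb E|q(\boldsymbol X_{-\mathcal X(m)})|}{\min_{1\le m'\le M,\ l\in\mathcal X(m'),\ a\in\{0,1\}}\mathbb P(X_l=a)}.$$ (ii) For all distinct $l,k\in\{1,\dots,M\}$ and every measurable $q:\mathbb R^{p-\#\mathcal X(l)}\to\mathbb R$, almost surely $$|\mathbb E(q(\boldsymbol X_{-\mathcal X(l)})\mid\boldsymbol X_{\mathcal X(k)},\boldsymbol X_{\mathcal X(l)})-\mathbb E(q(\boldsymbol X_{-\mathcal X(l)})\mid\boldsymbol X_{\mathcal X(k)})|\le\frac{2\delta_0\,\mathbb E|q(\boldsymbol X_{-\mathcal X(l)})|}{p_{\min}}.$$ (iii) For all distinct $l,k\in\{1,\dots,M\}$ and every measurable $q:\mathbb R^{p-\#\mathcal X(\{l,k\})}\to\mathbb R$, almost surely $$|\mathbb E(q(\boldsymbol X_{-\mathcal X(\{k,l\})})\mid\boldsymbol X_{\mathcal X(k)},\boldsymbol X_{\mathcal X(l)})-\mathbb E q(\boldsymbol X_{-\mathcal X(\{k,l\})})|\le\frac{3\delta_0\,\mathbb E|q(\boldsymbol X_{-\mathcal X(\{k,l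\})})|}{p_{\min}}.$$
   Context: Setup. $\boldsymbol X=(X_1,\dots,X_p)^\top$ is a random vector in $\{0,1\}^p$; $\{1,\dots,p\}$ is partitioned into disjoint nonempty feature groups $\mathcal X(1),\dots,\mathcal X(M)$; a group is either a single feature or has $\#\mathcal X(m)>1$ and consists of one-hot indicators ($\sum_{j\in\mathcal X(m)}\mathbf 1\{X_j=1\}=1$ a.s.). $\mathcal X(J)=\bigcup_{m\in J}\mathcal X(m)$; $\boldsymbol X_H=(X_j)_{j\in H}$, $\boldsymbol X_{-H}=(X_j)_{j\notin H}$. Conditional expectations/probabilities given null events are set to $0$. $p_{\min}=\min_{1\le l<k\le M,\,i\in\mathcal X(l),\,j\in\mathcal X(k),\,(a,b)\in\{0,1\}^2}\mathbb P(X_i=a,X_j=b)>0$; $\delta_0=\max_{1\le m\le M}\inf\{\delta\ge0:\mathbb P(\max_{i\in\mathcal X(m)}|\mathbb P(X_i=1\mid\boldsymbol X_{-\mathcal X(m)})-\mathbb P(X_i=1)|\le\delta)=1\}$. *)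

theory Defs
  imports "HOL-Probability.Probability"
begin

text \<open>A random vector X in {0,1}^p is modelled by its (discrete) law P, a pmf on
  vectors x :: nat => bool (x j = True meaning X_j = 1), indices 1..p.\<close>

definition restr :: "nat set \<Rightarrow> (nat \<Rightarrow> bool) \<Rightarrow> (nat \<Rightarrow> bool)" where
  "restr S x = (\<lambda>j. if j \<in> S then x j else False)"

definition agree :: "nat set \<Rightarrow> (nat \<Rightarrow> bool) \<Rightarrow> (nat \<Rightarrow> bool) set" where
  "agree G x = {y. \<forall>j\<in>G. y j = x j}"

text \<open>Conditional probability / expectation given an event; null events give 0.\<close>
definition cprob :: "'a pmf \<Rightarrow> 'a set \<Rightarrow> 'a set \<Rightarrow> real" where
  "cprob P A B = (if measure_pmf.prob P B = 0 then 0
                  else measure_pmf.prob (cond_pmf P B) A)"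

definition cexp :: "'a pmf \<Rightarrow> ('a \<Rightarrow> real) \<Rightarrow> 'a set \<Rightarrow> real" where
  "cexp P f B = (if measure_pmf.prob P B = 0 then 0
                 else measure_pmf.expectation (cond_pmf P B) f)"

definition feature_groups ::
  "(nat \<Rightarrow> bool) pmf \<Rightarrow> nat \<Rightarrow> nat \<Rightarrow> (nat \<Rightarrow> nat set) \<Rightarrow> bool" where
  "feature_groups P p M grp \<longleftrightarrow>
     (\<forall>x\<in>set_pmf P. \<forall>j. j \<notin> {1..p} \<longrightarrow> \<not> x j) \<and>
     (\<forall>m\<in>{1..M}. grp m \<noteq> {}) \<and>
     (\<forall>m\<in>{1..M}. \<forall>m'\<in>{1..M}. m \<noteq> m' \<longrightarrow> grp m \<inter> grp m' = {}) \<and>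
     (\<Union>m\<in>{1..M}. grp m) = {1..p} \<and>
     (\<forall>m\<in>{1..M}. card (grp m) > 1 \<longrightarrow>
        measure_pmf.prob P {x. card {j\<in>grp m. x j} = 1} = 1)"

text \<open>Positivity part of p_min > 0 (all pairwise cell probabilities positive).\<close>
definition pmin_pos :: "(nat \<Rightarrow> bool) pmf \<Rightarrow> nat \<Rightarrow> (nat \<Rightarrow> nat set) \<Rightarrow> bool" where
  "pmin_pos P M grp \<longleftrightarrow>
     (\<forall>l k i j a b. 1 \<le> l \<and> l < k \<and> k \<le> M \<and> i \<in> grp l \<and> j \<in> grp k \<longrightarrow>
        measure_pmf.prob P {x. x i = a \<and> x j = b} > 0)"

definition pmin :: "(nat \<Rightarrow> bool) pmf \<Rightarrow> nat \<Rightarrow> (nat \<Rightarrow> nat set) \<Rightarrow> real" where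
  "pmin P M grp = Min {measure_pmf.prob P {x. x i = a \<and> x j = b} | l k i j a b.
      1 \<le> l \<and> l < k \<and> k \<le> M \<and> i \<in> grp l \<and> j \<in> grp k}"

definition marg_min :: "(nat \<Rightarrow> bool) pmf \<Rightarrow> nat \<Rightarrow> (nat \<Rightarrow> nat set) \<Rightarrow> real" where
  "marg_min P M grp = Min {measure_pmf.prob P {x. x l = a} | m l a.
      m \<in> {1..M} \<and> l \<in> grp m}"

definition delta0 :: "(nat \<Rightarrow> bool) pmf \<Rightarrow> nat \<Rightarrow> nat \<Rightarrow> (nat \<Rightarrow> nat set) \<Rightarrow> real" where
  "delta0 P p M grp = Max ((\<lambda>m. Inf {\<delta>::real. \<delta> \<ge> 0 \<and>
      measure_pmf.prob P {x. Max ((\<lambda>i. \<bar>cprob P {y. y i} (agree ({1..p} - grp m) x)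
            - measure_pmf.prob P {y. y i}\<bar>) ` grp m) \<le> \<delta>} = 1}) ` {1..M})"

end

theory Submission
  imports Defs
begin

text \<open>
  Conditioning on the coordinates outside a group m, the group event {X_grp(m) = x_grp(m)} is
  a.s. a single coordinate event {X_i = a} (a group is a single feature or one-hot), so its
  conditional probability deviates from its probability by at most delta0. By the tower property
  this yields |E[g 1_E] - P(E) E g| \<le> delta0 E|g| for every g of the outside coordinates, and
  dividing by P(E) gives (i). For (ii) the same estimate is applied to g 1_F and to 1_F, with F the
  event of group k, in the numerator and denominator of E(g | F \<inter> E); (iii) combines (ii) with (i)
  for group k by the triangle inequality. The denominators are bounded below by marg_min and p_min.
\<close>

section \<open>Conditioning on a function on a finitely supported pmf\<close>

lemma measure_pmf_prob_eq_sum: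
  assumes "finite (set_pmf P)"
  shows "measure_pmf.prob P A = (\<Sum>y\<in>set_pmf P. pmf P y * indicator A y)"
proof -
  have "measure_pmf.prob P A = measure_pmf.prob P (A \<inter> set_pmf P)"
    by (simp add: measure_Int_set_pmf)
  also have "\<dots> = sum (pmf P) (A \<inter> set_pmf P)"
    using assms by (simp add: measure_measure_pmf_finite)
  also have "\<dots> = (\<Sum>y\<in>set_pmf P. pmf P y * indicator A y)"
    using assms by (simp add: sum.inter_restrict Int_commute indicator_def if_distrib cong: if_cong)
  finally show ?thesis .
qed

lemma measure_pmf_expectation_eq_sum:
  assumes "finite (set_pmf P)"
  shows "measure_pmf.expectation P f = (\<Sum>y\<in>set_pmf P. pmf P y * f y)"
  using integral_measure_pmf_real[OF assms, of P f] by (simp add: mult.commute)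

lemma cexp_eq_expectation_indicator:
  assumes "finite (set_pmf P)"
  shows "cexp P f B = measure_pmf.expectation P (\<lambda>y. indicator B y * f y) / measure_pmf.prob P B"
proof (cases "measure_pmf.prob P B = 0")
  case True then show ?thesis by (simp add: cexp_def)
next
  case False
  then have ne: "set_pmf P \<inter> B \<noteq> {}" by (simp add: measure_pmf_zero_iff)
  have "measure_pmf.expectation (cond_pmf P B) f = (\<Sum>y\<in>set_pmf P. f y * pmf (cond_pmf P B) y)"
    by (rule integral_measure_pmf_real) (use assms ne in auto)
  also have "\<dots> = (\<Sum>y\<in>set_pmf P. pmf P y * (indicator B y * f y) / measure_pmf.prob P B)"
    by (rule sum.cong) (auto simp: pmf_cond[OF ne] indicator_def)
  finally show ?thesis
    using False by (simp add: cexp_def sum_divide_distrib measure_pmf_expectation_eq_sum[OF assms])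
qed

lemma cprob_eq_ratio:
  assumes "finite (set_pmf P)"
  shows "cprob P A B = measure_pmf.prob P (A \<inter> B) / measure_pmf.prob P B"
proof (cases "measure_pmf.prob P B = 0")
  case True then show ?thesis by (simp add: cprob_def)
next
  case False
  then have ne: "set_pmf P \<inter> B \<noteq> {}" by (simp add: measure_pmf_zero_iff)
  have "measure_pmf.prob (cond_pmf P B) A
      = (\<Sum>y\<in>set_pmf P \<inter> B. pmf (cond_pmf P B) y * indicator A y)"
    using measure_pmf_prob_eq_sum[of "cond_pmf P B"] assms ne by simp
  also have "\<dots> = (\<Sum>y\<in>set_pmf P. pmf P y * indicator (A \<inter> B) y / measure_pmf.prob P B)"
    using assms by (subst sum.inter_restrict) (auto intro!: sum.cong simp: pmf_cond[OF ne] indicator_def)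
  finally show ?thesis
    using False by (simp add: cprob_def sum_divide_distrib measure_pmf_prob_eq_sum[OF assms])
qed

lemma expectation_indicator_eq_cprob_fibre:
  assumes fin: "finite (set_pmf P)"
    and g: "\<And>y y'. h y' = h y \<Longrightarrow> g y' = g y"
  shows "measure_pmf.expectation P (\<lambda>y. g y * indicator E y)
       = measure_pmf.expectation P (\<lambda>y. g y * cprob P E (h -` {h y}))"
proof -
  let ?S = "set_pmf P" and ?w = "pmf P"
  define N where "N y = measure_pmf.prob P (h -` {h y})" for y
  have N_pos: "N y > 0" if "y \<in> ?S" for y
    unfolding N_def using that by (intro measure_pmf_posI[of y]) auto
  have "(\<Sum>y\<in>?S. ?w y * (g y * cprob P E (h -` {h y})))
      = (\<Sum>y\<in>?S. \<Sum>y'\<in>?S. ?w y * (g y * (?w y' * indicator (E \<inter> h -` {h y}) y') / N y))"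
    by (simp add: cprob_eq_ratio[OF fin] measure_pmf_prob_eq_sum[OF fin] N_def
        sum_distrib_left sum_divide_distrib Int_commute)
  also have "\<dots> = (\<Sum>y\<in>?S. \<Sum>y'\<in>?S. ?w y' * (g y' * indicator E y') * (?w y * indicator (h -` {h y'}) y / N y'))"
  proof (intro sum.cong refl)
    fix y y'
    show "?w y * (g y * (?w y' * indicator (E \<inter> h -` {h y}) y') / N y)
        = ?w y' * (g y' * indicator E y') * (?w y * indicator (h -` {h y'}) y / N y')"
    proof (cases "h y' = h y")
      case True
      then show ?thesis using g[OF True] by (simp add: N_def indicator_def)
    next
      case False
      then show ?thesis by (simp add: indicator_def)
    qed
  qed
  also have "\<dots> = (\<Sum>y'\<in>?S. ?w y' * (g y' * indicator E y') * ((\<Sum>y\<in>?S. ?w y * indicator (h -` {h y'}) y) / N y'))"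
    by (subst sum.swap) (simp add: sum_distrib_left sum_divide_distrib)
  also have "\<dots> = (\<Sum>y'\<in>?S. ?w y' * (g y' * indicator E y'))"
  proof (intro sum.cong refl)
    fix y' assume "y' \<in> ?S"
    then show "?w y' * (g y' * indicator E y') * ((\<Sum>y\<in>?S. ?w y * indicator (h -` {h y'}) y) / N y')
        = ?w y' * (g y' * indicator E y')"
      using N_pos[of y'] by (simp add: N_def measure_pmf_prob_eq_sum[OF fin, symmetric])
  qed
  finally show ?thesis by (simp add: measure_pmf_expectation_eq_sum[OF fin])
qed

lemma expectation_indicator_approx:
  assumes fin: "finite (set_pmf P)"
    and g: "\<And>y y'. h y' = h y \<Longrightarrow> g y' = g y"
    and dev: "\<And>y. y \<in> set_pmf P \<Longrightarrow> \<bar>cprob P E (h -` {h y}) - measure_pmf.prob P E\<bar> \<le> d"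
  shows "\<bar>measure_pmf.expectation P (\<lambda>y. g y * indicator E y)
          - measure_pmf.prob P E * measure_pmf.expectation P g\<bar>
       \<le> d * measure_pmf.expectation P (\<lambda>y. \<bar>g y\<bar>)"
proof -
  let ?S = "set_pmf P" and ?w = "pmf P" and ?c = "\<lambda>y. cprob P E (h -` {h y}) - measure_pmf.prob P E"
  have "measure_pmf.expectation P (\<lambda>y. g y * indicator E y)
          - measure_pmf.prob P E * measure_pmf.expectation P g
      = (\<Sum>y\<in>?S. ?w y * (g y * ?c y))"
    using expectation_indicator_eq_cprob_fibre[of P h g E, OF fin g]
    by (simp add: measure_pmf_expectation_eq_sum[OF fin] sum_distrib_left sum_subtractf algebra_simps)
  also have "\<bar>\<dots>\<bar> \<le> (\<Sum>y\<in>?S. \<bar>?w y * (g y * ?c y)\<bar>)"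
    by (rule sum_abs)
  also have "\<dots> \<le> (\<Sum>y\<in>?S. d * (?w y * \<bar>g y\<bar>))"
  proof (rule sum_mono)
    fix y assume "y \<in> ?S"
    then have "?w y * \<bar>g y\<bar> * \<bar>?c y\<bar> \<le> ?w y * \<bar>g y\<bar> * d"
      using dev by (intro mult_left_mono) auto
    then show "\<bar>?w y * (g y * ?c y)\<bar> \<le> d * (?w y * \<bar>g y\<bar>)"
      by (simp add: abs_mult mult_ac)
  qed
  finally show ?thesis
    by (simp add: measure_pmf_expectation_eq_sum[OF fin] sum_distrib_left)
qed

lemma abs_expectation_minus_cexp_le:
  assumes fin: "finite (set_pmf P)"
    and g: "\<And>y y'. h y' = h y \<Longrightarrow> g y' = g y"
    and dev: "\<And>y. y \<in> set_pmf P \<Longrightarrow> \<bar>cprob P E (h -` {h y}) - measure_pmf.prob P E\<bar> \<le> d"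
    and E_pos: "measure_pmf.prob P E > 0"
  shows "\<bar>measure_pmf.expectation P g - cexp P g E\<bar>
       \<le> d * measure_pmf.expectation P (\<lambda>y. \<bar>g y\<bar>) / measure_pmf.prob P E"
proof -
  define pE where "pE = measure_pmf.prob P E"
  define N where "N = measure_pmf.expectation P (\<lambda>y. g y * indicator E y)"
  have "measure_pmf.expectation P g - cexp P g E = (pE * measure_pmf.expectation P g - N) / pE"
    using E_pos by (simp add: cexp_eq_expectation_indicator[OF fin] pE_def N_def mult.commute field_simps)
  moreover have "\<bar>pE * measure_pmf.expectation P g - N\<bar> \<le> d * measure_pmf.expectation P (\<lambda>y. \<bar>g y\<bar>)"
    using expectation_indicator_approx[where h = h and g = g, OF fin g dev] by (simp add: pE_def N_def abs_minus_commute)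
  ultimately show ?thesis
    using E_pos by (simp add: pE_def divide_right_mono)
qed

lemma abs_divide_diff_le:
  fixes N D A a c e d G :: real
  assumes "a > 0" "D > 0" "\<bar>N - c * A\<bar> \<le> e" "\<bar>D - c * a\<bar> \<le> d * a" "\<bar>A\<bar> \<le> G"
  shows "\<bar>N / D - A / a\<bar> \<le> (e + d * G) / D"
proof -
  have "N / D - A / a = ((N - c * A) * a - A * (D - c * a)) / (a * D)"
    using assms(1,2) by (simp add: field_simps)
  moreover have "\<bar>(N - c * A) * a\<bar> \<le> e * a"
    using assms(1,3) by (simp add: abs_mult mult_right_mono)
  moreover have "\<bar>A * (D - c * a)\<bar> \<le> G * (d * a)"
    using assms(4,5) by (simp add: abs_mult mult_mono)
  ultimately have "\<bar>N / D - A / a\<bar> \<le> (e * a + G * (d * a)) / (a * D)"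
    using assms(1,2) by (simp add: abs_divide divide_right_mono)
  also have "\<dots> = (e + d * G) / D"
    using assms(1,2) by (simp add: field_simps)
  finally show ?thesis .
qed

text \<open>The near-independence of E from h is used twice: for g 1_F in the numerator and for
  1_F in the denominator of the conditional expectation given F \<inter> E.\<close>
lemma abs_cexp_Int_minus_cexp_le:
  assumes fin: "finite (set_pmf P)"
    and g: "\<And>y y'. h y' = h y \<Longrightarrow> g y' = g y"
    and F: "\<And>y y'. h y' = h y \<Longrightarrow> y' \<in> F \<longleftrightarrow> y \<in> F"
    and dev: "\<And>y. y \<in> set_pmf P \<Longrightarrow> \<bar>cprob P E (h -` {h y}) - measure_pmf.prob P E\<bar> \<le> d"
    and FE_pos: "measure_pmf.prob P (F \<inter> E) > 0" and "d \<ge> 0"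
  shows "\<bar>cexp P g (F \<inter> E) - cexp P g F\<bar>
       \<le> 2 * d * measure_pmf.expectation P (\<lambda>y. \<bar>g y\<bar>) / measure_pmf.prob P (F \<inter> E)"
proof -
  let ?E = "measure_pmf.expectation P" and ?P = "measure_pmf.prob P"
  define gF where "gF = (\<lambda>y. indicator F y * g y)"
  define G where "G = ?E (\<lambda>y. \<bar>g y\<bar>)"
  have gF: "gF y' = gF y" and iF: "indicator F y' = (indicator F y :: real)" if "h y' = h y" for y y'
    using g[OF that] F[OF that] by (simp_all add: gF_def indicator_def)
  have abs_gF: "\<bar>gF y\<bar> \<le> \<bar>g y\<bar>" for y
    by (simp add: gF_def indicator_def)
  have E_abs_gF: "?E (\<lambda>y. \<bar>gF y\<bar>) \<le> G"
    unfolding G_def using abs_gF by (intro integral_mono integrable_measure_pmf_finite[OF fin])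
  have "\<bar>?E (\<lambda>y. gF y * indicator E y) - ?P E * ?E gF\<bar> \<le> d * G"
    using expectation_indicator_approx[where h = h and g = gF, OF fin gF dev]
      mult_left_mono[OF E_abs_gF \<open>d \<ge> 0\<close>] by linarith
  moreover have "\<bar>?P (F \<inter> E) - ?P E * ?P F\<bar> \<le> d * ?P F"
    using expectation_indicator_approx[where h = h and g = "indicator F", OF fin iF dev]
    by (simp add: indicator_inter_arith[symmetric])
  moreover have "\<bar>?E gF\<bar> \<le> G"
    using integral_abs_bound[of P gF] E_abs_gF by linarith
  moreover have "?P F > 0"
    using FE_pos measure_pmf.finite_measure_mono[of "F \<inter> E" F P] by auto
  ultimately have "\<bar>?E (\<lambda>y. gF y * indicator E y) / ?P (F \<inter> E) - ?E gF / ?P F\<bar>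
      \<le> (d * G + d * G) / ?P (F \<inter> E)"
    using FE_pos by (intro abs_divide_diff_le) auto
  then show ?thesis
    by (simp add: cexp_eq_expectation_indicator[OF fin] gF_def G_def indicator_inter_arith mult_ac)
qed

lemma measure_pmf_prob_cong:
  "(\<And>y. y \<in> set_pmf P \<Longrightarrow> y \<in> A \<longleftrightarrow> y \<in> B) \<Longrightarrow> measure_pmf.prob P A = measure_pmf.prob P B"
  by (rule measure_prob_cong_0) (auto simp: set_pmf_iff)

lemma cprob_cong:
  assumes "\<And>y. y \<in> set_pmf P \<Longrightarrow> y \<in> A \<longleftrightarrow> y \<in> A'"
  shows "cprob P A B = cprob P A' B"
proof (cases "measure_pmf.prob P B = 0")
  case False
  then have "set_pmf P \<inter> B \<noteq> {}" by (simp add: measure_pmf_zero_iff)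
  then have "set_pmf (cond_pmf P B) = set_pmf P \<inter> B" by (rule set_cond_pmf)
  with assms False show ?thesis unfolding cprob_def by (auto intro!: measure_pmf_prob_cong)
qed (simp add: cprob_def)

lemma cprob_Compl:
  assumes "measure_pmf.prob P B \<noteq> 0"
  shows "cprob P (- A) B = 1 - cprob P A B"
  using assms measure_pmf.prob_compl[of A "cond_pmf P B"]
  by (simp add: cprob_def Compl_eq_Diff_UNIV)

lemma mem_if_measure_pmf_prob_eq_1:
  "measure_pmf.prob P A = 1 \<Longrightarrow> y \<in> set_pmf P \<Longrightarrow> y \<in> A"
  using measure_pmf.prob_eq_1[of A P] by (simp add: AE_measure_pmf_iff)

section \<open>Feature groups\<close>

lemma vimage_restr_eq_agree: "restr R -` {restr R y} = agree R y"
proof (intro set_eqI iffI)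
  fix y' assume "y' \<in> restr R -` {restr R y}"
  then have eq: "restr R y' j = restr R y j" for j by simp
  have "y' j = y j" if "j \<in> R" for j
    using eq[of j] that by (simp add: restr_def)
  then show "y' \<in> agree R y" by (simp add: agree_def)
qed (auto simp: agree_def restr_def)

lemma restr_eq_mono:
  assumes "S \<subseteq> R" and "restr R y' = restr R y"
  shows "restr S y' = restr S y"
proof
  fix j
  show "restr S y' j = restr S y j"
    using assms(1) fun_cong[OF assms(2), of j] by (auto simp: restr_def)
qed

lemma agree_Un: "agree (A \<union> B) x = agree A x \<inter> agree B x"
  by (auto simp: agree_def)

lemma feature_groups_finite_set_pmf:
  assumes "feature_groups P p M grp"
  shows "finite (set_pmf P)"
proof (rule finite_subset)
  show "set_pmf P \<subseteq> (\<lambda>B j. j \<in> B) ` Pow {1..p}"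
  proof
    fix x assume "x \<in> set_pmf P"
    then have "x = (\<lambda>j. j \<in> {j\<in>{1..p}. x j})"
      using assms by (auto simp: feature_groups_def)
    then show "x \<in> (\<lambda>B j. j \<in> B) ` Pow {1..p}" by blast
  qed
qed simp

lemma feature_groups_subset:
  "feature_groups P p M grp \<Longrightarrow> m \<in> {1..M} \<Longrightarrow> grp m \<subseteq> {1..p}"
  unfolding feature_groups_def by blast

lemma feature_groups_disjoint:
  "feature_groups P p M grp \<Longrightarrow> m \<in> {1..M} \<Longrightarrow> m' \<in> {1..M} \<Longrightarrow> m \<noteq> m' \<Longrightarrow> grp m \<inter> grp m' = {}"
  unfolding feature_groups_def by blast

lemma feature_groups_nonempty:
  "feature_groups P p M grp \<Longrightarrow> m \<in> {1..M} \<Longrightarrow> grp m \<noteq> {}"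
  unfolding feature_groups_def by blast

lemma one_hot_mem_agree_iff:
  assumes x: "{j\<in>G. x j} = {i}" and y: "{j\<in>G. y j} = {i'}"
  shows "y \<in> agree G x \<longleftrightarrow> y i"
proof
  assume "y \<in> agree G x"
  then show "y i" using x by (auto simp: agree_def)
next
  assume "y i"
  then have "i \<in> {j\<in>G. y j}" using x by blast
  then have y_i: "{j\<in>G. y j} = {i}" using y by simp
  have "y j = x j" if "j \<in> G" for j
  proof -
    have "y j \<longleftrightarrow> j \<in> {i}" using that unfolding y_i[symmetric] by simp
    also have "\<dots> \<longleftrightarrow> x j" using that unfolding x[symmetric] by simp
    finally show ?thesis by simp
  qed
  then show "y \<in> agree G x" by (simp add: agree_def)
qed

text \<open>A singleton group is one coordinate; a one-hot group is determined a.s. by which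
  of its indicators equals 1, so in both cases X_grp(m) = x_grp(m) is a.s. a single event X_i = a.\<close>
lemma group_event_eq_coordinate_event:
  assumes fg: "feature_groups P p M grp" and m: "m \<in> {1..M}" and x: "x \<in> set_pmf P"
  obtains i a where "i \<in> grp m" "\<And>y. y \<in> set_pmf P \<Longrightarrow> y \<in> agree (grp m) x \<longleftrightarrow> y i = a"
proof (cases "card (grp m) > 1")
  case False
  have "finite (grp m)"
    using feature_groups_subset[OF fg m] by (rule finite_subset) simp
  then have "card (grp m) = 1"
    using False feature_groups_nonempty[OF fg m] by (simp add: card_gt_0_iff leI le_antisym)
  then obtain i where "grp m = {i}" by (rule card_1_singletonE)
  then show ?thesis by (intro that[of i "x i"]) (auto simp: agree_def)
next
  case True
  then have prob_one_hot: "measure_pmf.prob P {y. card {j\<in>grp m. y j} = 1} = 1"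
    using fg m unfolding feature_groups_def by blast
  then have one_hot: "\<exists>i. {j\<in>grp m. y j} = {i}" if "y \<in> set_pmf P" for y
    using mem_if_measure_pmf_prob_eq_1[OF prob_one_hot that] by (simp add: card_1_singleton_iff)
  obtain i where i: "{j\<in>grp m. x j} = {i}" using one_hot[OF x] by blast
  show ?thesis
  proof (rule that[of i True])
    show "i \<in> grp m" using i by blast
    fix y assume "y \<in> set_pmf P"
    then obtain i' where "{j\<in>grp m. y j} = {i'}" using one_hot by blast
    with i show "y \<in> agree (grp m) x \<longleftrightarrow> y i = True"
      by (simp add: one_hot_mem_agree_iff)
  qed
qed

lemma cprob_coordinate_deviation_le_delta0:
  assumes fg: "feature_groups P p M grp" and m: "m \<in> {1..M}" and i: "i \<in> grp m"
    and y: "y \<in> set_pmf P"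
  shows "\<bar>cprob P {z. z i} (agree ({1..p} - grp m) y) - measure_pmf.prob P {z. z i}\<bar>
      \<le> delta0 P p M grp"
proof -
  define \<Phi> where "\<Phi> x = Max ((\<lambda>i. \<bar>cprob P {z. z i} (agree ({1..p} - grp m) x)
            - measure_pmf.prob P {z. z i}\<bar>) ` grp m)" for x
  define T where "T = {\<delta>::real. \<delta> \<ge> 0 \<and> measure_pmf.prob P {x. \<Phi> x \<le> \<delta>} = 1}"
  have fin: "finite (grp m)"
    using feature_groups_subset[OF fg m] by (rule finite_subset) simp
  have "\<bar>cprob P A B - measure_pmf.prob P A\<bar> \<le> 1" for A B
  proof -
    have "0 \<le> cprob P A B" "cprob P A B \<le> 1" by (simp_all add: cprob_def)
    moreover have "0 \<le> measure_pmf.prob P A" "measure_pmf.prob P A \<le> 1" by simp_all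
    ultimately show ?thesis unfolding abs_le_iff by linarith
  qed
  then have "\<Phi> x \<le> 1" for x
    unfolding \<Phi>_def using fin i by (subst Max_le_iff) auto
  then have "1 \<in> T" by (simp add: T_def)
  then have "\<Phi> y \<le> Inf T"
    by (intro cInf_greatest) (blast, auto simp: T_def dest: mem_if_measure_pmf_prob_eq_1[OF _ y])
  moreover have "Inf T \<le> delta0 P p M grp"
    unfolding delta0_def T_def \<Phi>_def using m by (intro Max_ge) auto
  moreover have "\<bar>cprob P {z. z i} (agree ({1..p} - grp m) y) - measure_pmf.prob P {z. z i}\<bar> \<le> \<Phi> y"
    unfolding \<Phi>_def using fin i by (intro Max_ge) auto
  ultimately show ?thesis by linarith
qed

lemma cprob_group_deviation_le_delta0:
  assumes fg: "feature_groups P p M grp" and m: "m \<in> {1..M}"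
    and x: "x \<in> set_pmf P" and y: "y \<in> set_pmf P"
  shows "\<bar>cprob P (agree (grp m) x) (agree ({1..p} - grp m) y)
          - measure_pmf.prob P (agree (grp m) x)\<bar> \<le> delta0 P p M grp"
proof -
  obtain i a where i: "i \<in> grp m" and ia: "\<And>z. z \<in> set_pmf P \<Longrightarrow> z \<in> agree (grp m) x \<longleftrightarrow> z i = a"
    using group_event_eq_coordinate_event[OF fg m x] by blast
  define B where "B = agree ({1..p} - grp m) y"
  have "cprob P (agree (grp m) x) B = cprob P {z. z i = a} B"
    and "measure_pmf.prob P (agree (grp m) x) = measure_pmf.prob P {z. z i = a}"
    using ia by (auto intro!: cprob_cong measure_pmf_prob_cong)
  moreover have dev: "\<bar>cprob P {z. z i} B - measure_pmf.prob P {z. z i}\<bar> \<le> delta0 P p M grp"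
    unfolding B_def by (rule cprob_coordinate_deviation_le_delta0[OF fg m i y])
  moreover have "measure_pmf.prob P B \<noteq> 0"
    using measure_pmf_posI[OF y, of B] by (simp add: B_def agree_def)
  then have "cprob P {z. \<not> z i} B = 1 - cprob P {z. z i} B"
    using cprob_Compl[of P B "{z. z i}"] by (simp add: Collect_neg_eq)
  moreover have "measure_pmf.prob P {z. \<not> z i} = 1 - measure_pmf.prob P {z. z i}"
    using measure_pmf.prob_compl[of "{z. z i}" P] by (simp add: Collect_neg_eq Compl_eq_Diff_UNIV)
  ultimately show ?thesis
    unfolding B_def[symmetric] by (cases a) (simp_all add: abs_minus_commute)
qed

lemma delta0_nonneg:
  assumes "feature_groups P p M grp" and "m \<in> {1..M}"
  shows "delta0 P p M grp \<ge> 0"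
proof -
  obtain x where "x \<in> set_pmf P" using set_pmf_not_empty[of P] by blast
  then show ?thesis using cprob_group_deviation_le_delta0[OF assms] by fastforce
qed

lemma pmin_pos_pair_prob_gt_0:
  assumes fg: "feature_groups P p M grp" and "pmin_pos P M grp"
    and l: "l \<in> {1..M}" and k: "k \<in> {1..M}" and "l \<noteq> k" and "i \<in> grp l" and "j \<in> grp k"
  shows "measure_pmf.prob P {x. x i = a \<and> x j = b} > 0"
proof (cases "l < k")
  case True
  then show ?thesis using assms unfolding pmin_pos_def by auto
next
  case False
  with \<open>l \<noteq> k\<close> have "k < l" by simp
  then have "measure_pmf.prob P {x. x j = b \<and> x i = a} > 0"
    using assms unfolding pmin_pos_def by auto
  then show ?thesis by (simp add: conj_commute)
qed

lemma finite_marginals: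
  assumes "feature_groups P p M grp"
  shows "finite {measure_pmf.prob P {x. x l = a} | m l a. m \<in> {1..M} \<and> l \<in> grp m}"
proof (rule finite_subset)
  show "{measure_pmf.prob P {x. x l = a} | m l a. m \<in> {1..M} \<and> l \<in> grp m}
      \<subseteq> (\<lambda>(l, a). measure_pmf.prob P {x. x l = a}) ` ({1..p} \<times> UNIV)"
    using feature_groups_subset[OF assms] by fastforce
qed simp

lemma marg_min_le_prob_group_event:
  assumes fg: "feature_groups P p M grp" and m: "m \<in> {1..M}" and x: "x \<in> set_pmf P"
  shows "marg_min P M grp \<le> measure_pmf.prob P (agree (grp m) x)"
proof -
  obtain i a where "i \<in> grp m" and ia: "\<And>y. y \<in> set_pmf P \<Longrightarrow> y \<in> agree (grp m) x \<longleftrightarrow> y i = a"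
    using group_event_eq_coordinate_event[OF fg m x] by blast
  then have "marg_min P M grp \<le> measure_pmf.prob P {y. y i = a}"
    unfolding marg_min_def using m by (intro Min_le[OF finite_marginals[OF fg]]) blast
  moreover have "measure_pmf.prob P (agree (grp m) x) = measure_pmf.prob P {y. y i = a}"
    using ia by (auto intro: measure_pmf_prob_cong)
  ultimately show ?thesis by simp
qed

lemma marg_min_nonneg:
  assumes fg: "feature_groups P p M grp" and m: "m \<in> {1..M}"
  shows "marg_min P M grp \<ge> 0"
proof -
  obtain i where "i \<in> grp m" using feature_groups_nonempty[OF fg m] by blast
  then show ?thesis
    unfolding marg_min_def using m by (subst Min_ge_iff[OF finite_marginals[OF fg]]) auto
qed

lemma marg_min_gt_0:
  assumes fg: "feature_groups P p M grp" and pp: "pmin_pos P M grp" and M: "M \<ge> 2"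
  shows "marg_min P M grp > 0"
proof -
  have marginal_pos: "measure_pmf.prob P {x. x l = a} > 0" if m: "m \<in> {1..M}" and l: "l \<in> grp m" for m l a
  proof -
    define m' :: nat where "m' = (if m = 1 then 2 else 1)"
    have m': "m' \<in> {1..M}" "m' \<noteq> m"
      using M m by (auto simp: m'_def)
    obtain j where "j \<in> grp m'" using feature_groups_nonempty[OF fg m'(1)] by blast
    then have "measure_pmf.prob P {x. x l = a \<and> x j = True} > 0"
      using pmin_pos_pair_prob_gt_0[OF fg pp m m'(1) m'(2)[symmetric] l] by blast
    also have "\<dots> \<le> measure_pmf.prob P {x. x l = a}"
      by (rule measure_pmf.finite_measure_mono) auto
    finally show ?thesis .
  qed
  obtain i where "i \<in> grp 1" using feature_groups_nonempty[OF fg, of 1] M by auto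
  then have "{measure_pmf.prob P {x. x l = a} | m l a. m \<in> {1..M} \<and> l \<in> grp m} \<noteq> {}"
    using M by fastforce
  then show ?thesis
    unfolding marg_min_def using marginal_pos Min_gr_iff[OF finite_marginals[OF fg]] by blast
qed

lemma finite_pair_probs:
  assumes fg: "feature_groups P p M grp"
  shows "finite {measure_pmf.prob P {x. x i = a \<and> x j = b} | l k i j a b.
      1 \<le> l \<and> l < k \<and> k \<le> M \<and> i \<in> grp l \<and> j \<in> grp k}"
proof (rule finite_subset)
  show "{measure_pmf.prob P {x. x i = a \<and> x j = b} | l k i j a b.
      1 \<le> l \<and> l < k \<and> k \<le> M \<and> i \<in> grp l \<and> j \<in> grp k}
    \<subseteq> (\<lambda>(i, j, a, b). measure_pmf.prob P {x. x i = a \<and> x j = b}) ` ({1..p} \<times> {1..p} \<times> UNIV \<times> UNIV)"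
  proof
    fix v assume "v \<in> {measure_pmf.prob P {x. x i = a \<and> x j = b} | l k i j a b.
      1 \<le> l \<and> l < k \<and> k \<le> M \<and> i \<in> grp l \<and> j \<in> grp k}"
    then obtain l k i j a b where v: "v = measure_pmf.prob P {x. x i = a \<and> x j = b}"
      and "1 \<le> l" "l < k" "k \<le> M" "i \<in> grp l" "j \<in> grp k" by blast
    then have "i \<in> {1..p}" "j \<in> {1..p}"
      using feature_groups_subset[OF fg, of l] feature_groups_subset[OF fg, of k] by auto
    with v show "v \<in> (\<lambda>(i, j, a, b). measure_pmf.prob P {x. x i = a \<and> x j = b}) ` ({1..p} \<times> {1..p} \<times> UNIV \<times> UNIV)"
      by (intro image_eqI[of _ _ "(i, j, a, b)"]) auto
  qed
qed simp

lemma pmin_le_prob_group_events: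
  assumes fg: "feature_groups P p M grp"
    and l: "l \<in> {1..M}" and k: "k \<in> {1..M}" and "l \<noteq> k" and x: "x \<in> set_pmf P"
  shows "pmin P M grp \<le> measure_pmf.prob P (agree (grp k) x \<inter> agree (grp l) x)"
proof -
  obtain i a where i: "i \<in> grp k" and ia: "\<And>y. y \<in> set_pmf P \<Longrightarrow> y \<in> agree (grp k) x \<longleftrightarrow> y i = a"
    using group_event_eq_coordinate_event[OF fg k x] by blast
  obtain j b where j: "j \<in> grp l" and jb: "\<And>y. y \<in> set_pmf P \<Longrightarrow> y \<in> agree (grp l) x \<longleftrightarrow> y j = b"
    using group_event_eq_coordinate_event[OF fg l x] by blast
  have "measure_pmf.prob P {y. y i = a \<and> y j = b} \<in> {measure_pmf.prob P {x. x i = a \<and> x j = b} | l k i j a b.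
      1 \<le> l \<and> l < k \<and> k \<le> M \<and> i \<in> grp l \<and> j \<in> grp k}"
  proof (cases "k < l")
    case True
    then show ?thesis using i j k l
      by (intro CollectI exI[of _ k] exI[of _ l] exI[of _ i] exI[of _ j] exI[of _ a] exI[of _ b]) simp
  next
    case False
    then have "l < k" using \<open>l \<noteq> k\<close> by simp
    moreover have "{y. y i = a \<and> y j = b} = {y. y j = b \<and> y i = a}" by auto
    ultimately show ?thesis using i j k l
      by (intro CollectI exI[of _ l] exI[of _ k] exI[of _ j] exI[of _ i] exI[of _ b] exI[of _ a]) simp
  qed
  then have "pmin P M grp \<le> measure_pmf.prob P {y. y i = a \<and> y j = b}"
    unfolding pmin_def by (rule Min_le[OF finite_pair_probs[OF fg]])
  moreover have "measure_pmf.prob P (agree (grp k) x \<inter> agree (grp l) x) = measure_pmf.prob P {y. y i = a \<and> y j = b}"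
    using ia jb by (auto intro: measure_pmf_prob_cong)
  ultimately show ?thesis by simp
qed

lemma pmin_gt_0:
  assumes fg: "feature_groups P p M grp" and pp: "pmin_pos P M grp" and M: "M \<ge> 2"
  shows "pmin P M grp > 0"
proof -
  let ?Pairs = "{measure_pmf.prob P {x. x i = a \<and> x j = b} | l k i j a b.
      1 \<le> l \<and> l < k \<and> k \<le> M \<and> i \<in> grp l \<and> j \<in> grp k}"
  obtain i j where "i \<in> grp 1" "j \<in> grp 2"
    using feature_groups_nonempty[OF fg, of 1] feature_groups_nonempty[OF fg, of 2] M by fastforce
  then have "measure_pmf.prob P {x. x i = True \<and> x j = True} \<in> ?Pairs"
    using M by (intro CollectI exI[of _ 1] exI[of _ 2] exI[of _ i] exI[of _ j] exI[of _ True] exI[of _ True]) simp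
  then have "?Pairs \<noteq> {}" by blast
  moreover have "\<forall>v\<in>?Pairs. v > 0"
    using pp unfolding pmin_pos_def by blast
  ultimately show ?thesis
    unfolding pmin_def using Min_gr_iff[OF finite_pair_probs[OF fg]] by blast
qed

section \<open>The three bounds\<close>

lemma abs_expectation_minus_cexp_group_le:
  assumes fg: "feature_groups P p M grp" and m: "m \<in> {1..M}" and x: "x \<in> set_pmf P"
    and S: "S \<subseteq> {1..p} - grp m"
  shows "\<bar>measure_pmf.expectation P (\<lambda>y. q (restr S y)) - cexp P (\<lambda>y. q (restr S y)) (agree (grp m) x)\<bar>
       \<le> delta0 P p M grp * measure_pmf.expectation P (\<lambda>y. \<bar>q (restr S y)\<bar>)
          / measure_pmf.prob P (agree (grp m) x)"
proof -
  let ?h = "restr ({1..p} - grp m)"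
  have "q (restr S y') = q (restr S y)" if "?h y' = ?h y" for y y'
    using restr_eq_mono[OF S that] by simp
  moreover have "\<bar>cprob P (agree (grp m) x) (?h -` {?h y}) - measure_pmf.prob P (agree (grp m) x)\<bar>
      \<le> delta0 P p M grp" if "y \<in> set_pmf P" for y
    unfolding vimage_restr_eq_agree by (rule cprob_group_deviation_le_delta0[OF fg m x that])
  moreover have "measure_pmf.prob P (agree (grp m) x) > 0"
    using measure_pmf_posI[OF x, of "agree (grp m) x"] by (simp add: agree_def)
  ultimately show ?thesis
    by (rule abs_expectation_minus_cexp_le[OF feature_groups_finite_set_pmf[OF fg]])
qed

lemma abs_cexp_group_pair_minus_cexp_le:
  assumes fg: "feature_groups P p M grp" and l: "l \<in> {1..M}" and k: "k \<in> {1..M}" and "l \<noteq> k"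
    and x: "x \<in> set_pmf P" and S: "S \<subseteq> {1..p} - grp l"
  shows "\<bar>cexp P (\<lambda>y. q (restr S y)) (agree (grp k \<union> grp l) x)
          - cexp P (\<lambda>y. q (restr S y)) (agree (grp k) x)\<bar>
       \<le> 2 * delta0 P p M grp * measure_pmf.expectation P (\<lambda>y. \<bar>q (restr S y)\<bar>)
          / measure_pmf.prob P (agree (grp k \<union> grp l) x)"
proof -
  let ?h = "restr ({1..p} - grp l)"
  have k_sub: "grp k \<subseteq> {1..p} - grp l"
    using feature_groups_subset[OF fg k] feature_groups_disjoint[OF fg k l] \<open>l \<noteq> k\<close> by blast
  have "q (restr S y') = q (restr S y)" if "?h y' = ?h y" for y y'
    using restr_eq_mono[OF S that] by simp
  moreover have "y' \<in> agree (grp k) x \<longleftrightarrow> y \<in> agree (grp k) x" if "?h y' = ?h y" for y y'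
    using restr_eq_mono[OF k_sub that] by (simp flip: vimage_restr_eq_agree)
  moreover have "\<bar>cprob P (agree (grp l) x) (?h -` {?h y}) - measure_pmf.prob P (agree (grp l) x)\<bar>
      \<le> delta0 P p M grp" if "y \<in> set_pmf P" for y
    unfolding vimage_restr_eq_agree by (rule cprob_group_deviation_le_delta0[OF fg l x that])
  moreover have "measure_pmf.prob P (agree (grp k) x \<inter> agree (grp l) x) > 0"
    using measure_pmf_posI[OF x, of "agree (grp k) x \<inter> agree (grp l) x"] by (simp add: agree_def)
  ultimately show ?thesis
    unfolding agree_Un
    by (rule abs_cexp_Int_minus_cexp_le[OF feature_groups_finite_set_pmf[OF fg] _ _ _ _ delta0_nonneg[OF fg l]])
qed

lemma abs_expectation_minus_cexp_group_le_marg_min: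
  assumes fg: "feature_groups P p M grp" and pp: "pmin_pos P M grp"
    and m: "m \<in> {1..M}" and x: "x \<in> set_pmf P"
  shows "\<bar>measure_pmf.expectation P (\<lambda>y. q (restr ({1..p} - grp m) y))
           - cexp P (\<lambda>y. q (restr ({1..p} - grp m) y)) (agree (grp m) x)\<bar>
          \<le> delta0 P p M grp
             * measure_pmf.expectation P (\<lambda>y. \<bar>q (restr ({1..p} - grp m) y)\<bar>)
             / marg_min P M grp"
proof (cases "M \<ge> 2")
  case True
  have "\<bar>measure_pmf.expectation P (\<lambda>y. q (restr ({1..p} - grp m) y))
           - cexp P (\<lambda>y. q (restr ({1..p} - grp m) y)) (agree (grp m) x)\<bar>
      \<le> delta0 P p M grp * measure_pmf.expectation P (\<lambda>y. \<bar>q (restr ({1..p} - grp m) y)\<bar>)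
          / measure_pmf.prob P (agree (grp m) x)"
    by (rule abs_expectation_minus_cexp_group_le[OF fg m x subset_refl])
  also have "\<dots> \<le> delta0 P p M grp * measure_pmf.expectation P (\<lambda>y. \<bar>q (restr ({1..p} - grp m) y)\<bar>)
          / marg_min P M grp"
    using marg_min_gt_0[OF fg pp True] marg_min_le_prob_group_event[OF fg m x] delta0_nonneg[OF fg m]
    by (intro divide_left_mono) auto
  finally show ?thesis .
next
  case False
  \<comment> \<open>A single group covers all coordinates, so q is evaluated at a constant and both
    sides vanish (marg_min may then be 0).\<close>
  then have "M = 1" "m = 1" using m by auto
  then have "grp m = {1..p}"
    using fg unfolding feature_groups_def by simp
  then have "restr ({1..p} - grp m) y = (\<lambda>_. False)" for y
    by (simp add: restr_def)
  moreover have "measure_pmf.prob P (agree (grp m) x) \<noteq> 0"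
    using measure_pmf_posI[OF x, of "agree (grp m) x"] by (simp add: agree_def)
  ultimately show ?thesis
    using marg_min_nonneg[OF fg m] delta0_nonneg[OF fg m] by (simp add: cexp_def)
qed

lemma abs_cexp_group_pair_minus_cexp_le_pmin:
  assumes fg: "feature_groups P p M grp" and pp: "pmin_pos P M grp"
    and l: "l \<in> {1..M}" and k: "k \<in> {1..M}" and lk: "l \<noteq> k"
    and x: "x \<in> set_pmf P" and S: "S \<subseteq> {1..p} - grp l"
  shows "\<bar>cexp P (\<lambda>y. q (restr S y)) (agree (grp k \<union> grp l) x)
          - cexp P (\<lambda>y. q (restr S y)) (agree (grp k) x)\<bar>
       \<le> 2 * delta0 P p M grp * measure_pmf.expectation P (\<lambda>y. \<bar>q (restr S y)\<bar>) / pmin P M grp"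
proof -
  have "M \<ge> 2" using l k lk by auto
  have "\<bar>cexp P (\<lambda>y. q (restr S y)) (agree (grp k \<union> grp l) x)
          - cexp P (\<lambda>y. q (restr S y)) (agree (grp k) x)\<bar>
       \<le> 2 * delta0 P p M grp * measure_pmf.expectation P (\<lambda>y. \<bar>q (restr S y)\<bar>)
          / measure_pmf.prob P (agree (grp k \<union> grp l) x)"
    by (rule abs_cexp_group_pair_minus_cexp_le[OF fg l k lk x S])
  also have "\<dots> \<le> 2 * delta0 P p M grp * measure_pmf.expectation P (\<lambda>y. \<bar>q (restr S y)\<bar>) / pmin P M grp"
    using pmin_gt_0[OF fg pp \<open>M \<ge> 2\<close>] pmin_le_prob_group_events[OF fg l k lk x] delta0_nonneg[OF fg l]
    by (intro divide_left_mono) (auto simp: agree_Un)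
  finally show ?thesis .
qed

lemma abs_cexp_group_pair_minus_expectation_le_pmin:
  assumes fg: "feature_groups P p M grp" and pp: "pmin_pos P M grp"
    and l: "l \<in> {1..M}" and k: "k \<in> {1..M}" and lk: "l \<noteq> k" and x: "x \<in> set_pmf P"
  shows "\<bar>cexp P (\<lambda>y. q (restr ({1..p} - (grp k \<union> grp l)) y)) (agree (grp k \<union> grp l) x)
           - measure_pmf.expectation P (\<lambda>y. q (restr ({1..p} - (grp k \<union> grp l)) y))\<bar>
          \<le> 3 * delta0 P p M grp
             * measure_pmf.expectation P (\<lambda>y. \<bar>q (restr ({1..p} - (grp k \<union> grp l)) y)\<bar>)
             / pmin P M grp"
proof -
  define S where "S = {1..p} - (grp k \<union> grp l)"
  define B where "B = delta0 P p M grp * measure_pmf.expectation P (\<lambda>y. \<bar>q (restr S y)\<bar>) / pmin P M grp"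
  have "M \<ge> 2" using l k lk by auto
  have S_l: "S \<subseteq> {1..p} - grp l" and S_k: "S \<subseteq> {1..p} - grp k"
    unfolding S_def by blast+
  have "\<bar>cexp P (\<lambda>y. q (restr S y)) (agree (grp k \<union> grp l) x)
          - cexp P (\<lambda>y. q (restr S y)) (agree (grp k) x)\<bar> \<le> 2 * B"
    using abs_cexp_group_pair_minus_cexp_le_pmin[OF fg pp l k lk x S_l] by (simp add: B_def mult.assoc)
  moreover have "\<bar>measure_pmf.expectation P (\<lambda>y. q (restr S y)) - cexp P (\<lambda>y. q (restr S y)) (agree (grp k) x)\<bar>
      \<le> delta0 P p M grp * measure_pmf.expectation P (\<lambda>y. \<bar>q (restr S y)\<bar>)
          / measure_pmf.prob P (agree (grp k) x)"
    by (rule abs_expectation_minus_cexp_group_le[OF fg k x S_k])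
  moreover have "pmin P M grp \<le> measure_pmf.prob P (agree (grp k) x)"
    using pmin_le_prob_group_events[OF fg l k lk x]
      measure_pmf.finite_measure_mono[of "agree (grp k) x \<inter> agree (grp l) x" "agree (grp k) x" P]
    by auto
  then have "delta0 P p M grp * measure_pmf.expectation P (\<lambda>y. \<bar>q (restr S y)\<bar>)
      / measure_pmf.prob P (agree (grp k) x) \<le> B"
    unfolding B_def using pmin_gt_0[OF fg pp \<open>M \<ge> 2\<close>] delta0_nonneg[OF fg k]
    by (intro divide_left_mono) auto
  moreover have "3 * delta0 P p M grp * measure_pmf.expectation P (\<lambda>y. \<bar>q (restr S y)\<bar>) / pmin P M grp
      = 3 * B"
    by (simp add: B_def)
  ultimately show ?thesis
    unfolding S_def[symmetric] by linarith
qed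

theorem lemma6:
  fixes P :: "(nat \<Rightarrow> bool) pmf" and p M :: nat and grp :: "nat \<Rightarrow> nat set"
  assumes fg: "feature_groups P p M grp"
    and pmin_pos: "pmin_pos P M grp"
  shows
    "(\<forall>m\<in>{1..M}. \<forall>q :: (nat \<Rightarrow> bool) \<Rightarrow> real.
        AE x in measure_pmf P.
          \<bar>measure_pmf.expectation P (\<lambda>y. q (restr ({1..p} - grp m) y))
           - cexp P (\<lambda>y. q (restr ({1..p} - grp m) y)) (agree (grp m) x)\<bar>
          \<le> delta0 P p M grp
             * measure_pmf.expectation P (\<lambda>y. \<bar>q (restr ({1..p} - grp m) y)\<bar>)
             / marg_min P M grp)
   \<and> (\<forall>l\<in>{1..M}. \<forall>k\<in>{1..M}. l \<noteq> k \<longrightarrow> (\<forall>q :: (nat \<Rightarrow> bool) \<Rightarrow> real.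
        AE x in measure_pmf P.
          \<bar>cexp P (\<lambda>y. q (restr ({1..p} - grp l) y)) (agree (grp k \<union> grp l) x)
           - cexp P (\<lambda>y. q (restr ({1..p} - grp l) y)) (agree (grp k) x)\<bar>
          \<le> 2 * delta0 P p M grp
             * measure_pmf.expectation P (\<lambda>y. \<bar>q (restr ({1..p} - grp l) y)\<bar>)
             / pmin P M grp))
   \<and> (\<forall>l\<in>{1..M}. \<forall>k\<in>{1..M}. l \<noteq> k \<longrightarrow> (\<forall>q :: (nat \<Rightarrow> bool) \<Rightarrow> real.
        AE x in measure_pmf P.
          \<bar>cexp P (\<lambda>y. q (restr ({1..p} - (grp k \<union> grp l)) y)) (agree (grp k \<union> grp l) x)
           - measure_pmf.expectation P (\<lambda>y. q (restr ({1..p} - (grp k \<union> grp l)) y))\<bar>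
          \<le> 3 * delta0 P p M grp
             * measure_pmf.expectation P (\<lambda>y. \<bar>q (restr ({1..p} - (grp k \<union> grp l)) y)\<bar>)
             / pmin P M grp))"
  by (intro conjI ballI allI impI AE_pmfI subset_refl
      abs_expectation_minus_cexp_group_le_marg_min[OF fg pmin_pos]
      abs_cexp_group_pair_minus_cexp_le_pmin[OF fg pmin_pos]
      abs_cexp_group_pair_minus_expectation_le_pmin[OF fg pmin_pos])

end
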